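(* In the setting described in the context, for all $k\ge0$: if $u_{k-1}(s)>0$ for all states $s\in S\setminus W_2$, then for all player-2 strategies $\pi_2$ we have $\Pr_s^{\overline{\eta}_k,\pi_2}(\mathrm{Reach}(T\cup W_2))=1$ for all $s\in S$.
   Context: Concurrent game structure $G=(S,M,\Gamma_1,\Gamma_2,\delta)$: finite states, finite moves, nonempty move sets $\Gamma_i(s)$, $\delta(s,a_1,a_2)\in\mathrm{Distr}(S)$ (simultaneous independent moves). Selectors assign to each state a distribution on available moves; $\overline{\xi}$ is the memoryless strategy playing $\xi$ forever; $\Pr_s^{\pi_1,\pi_2}$ is the induced measure on plays from $s$; $\mathrm{Reach}(X)$ is the set of plays visiting $X$. For a valuation $v:S\to[0,1]$: $\mathrm{Pre}_{\xi_1,\xi_2}(v)(s)=\sum_{a,b}\sum_tv(t)\delta(s,a,b)(t)\xi_1(s)(a)\xi_2(s)(b)$, $\mathrm{Pre}_{1:\xi_1}(v)(s)=\inf_{\xi_2}\mathrm{Pre}_{\xi_1,\xi_2}(v)(s)$, $\mathrm{Pre}_1(v)(s)=\sup_{\xi_1}\mathrm{Pre}_{1:\xi_1}(v)(s)$. Fix $T\subseteq S$; $W_2=\{s:\sup_{\pi_1}\inf_{\pi_2}\Pr_s^{\pi_1,\pi_2}(\mathrm{Reach}(T))=0\}$; all states of $T\cup W_2$ are assumed absorbing. Value iteration: $u_0=[T]$ (indicator of $T$), $u_{k+1}=\mathrm{Pre}_1(u_k)$. For each $j\ge1$ fix a player-1 selector $\zeta_j$ with $\mathrm{Pre}_{1:\zeta_j}(u_{j-1})=\mathrm{Pre}_1(u_{j-1})$.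 Entry time $\ell_k(s)=\min\{j\le k:u_j(s)=u_k(s)\}$. Selector $\eta_k$: $\eta_k(s)=\zeta_{\ell_k(s)}(s)$ if $\ell_k(s)>0$, and $\eta_k(s)$ uniform on $\Gamma_1(s)$ if $\ell_k(s)=0$. *)

theory Defs
  imports "HOL-Probability.Probability"
begin

text \<open>Histories (finite nonempty sequences of states) are lists; a strategy maps
  a history to a distribution over moves.\<close>

definition is_selector :: "('s \<Rightarrow> 'm set) \<Rightarrow> ('s \<Rightarrow> 'm pmf) \<Rightarrow> bool" where
  "is_selector Gam xi \<longleftrightarrow> (\<forall>s. set_pmf (xi s) \<subseteq> Gam s)"

definition is_strategy :: "('s \<Rightarrow> 'm set) \<Rightarrow> ('s list \<Rightarrow> 'm pmf) \<Rightarrow> bool" where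
  "is_strategy Gam st \<longleftrightarrow> (\<forall>h. h \<noteq> [] \<longrightarrow> set_pmf (st h) \<subseteq> Gam (last h))"

definition memoryless :: "('s \<Rightarrow> 'm pmf) \<Rightarrow> ('s list \<Rightarrow> 'm pmf)" where
  "memoryless xi = (\<lambda>h. xi (last h))"

definition Pre_pair ::
  "('s::finite \<Rightarrow> 'm::finite \<Rightarrow> 'm \<Rightarrow> 's pmf) \<Rightarrow> ('s \<Rightarrow> 'm pmf) \<Rightarrow> ('s \<Rightarrow> 'm pmf)
    \<Rightarrow> ('s \<Rightarrow> real) \<Rightarrow> 's \<Rightarrow> real" where
  "Pre_pair \<delta> xi1 xi2 v s =
     (\<Sum>a\<in>UNIV. \<Sum>b\<in>UNIV. \<Sum>t\<in>UNIV. v t * pmf (\<delta> s a b) t * pmf (xi1 s) a * pmf (xi2 s) b)"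

definition Pre1_sel ::
  "('s::finite \<Rightarrow> 'm::finite set) \<Rightarrow> ('s \<Rightarrow> 'm \<Rightarrow> 'm \<Rightarrow> 's pmf) \<Rightarrow> ('s \<Rightarrow> 'm pmf)
    \<Rightarrow> ('s \<Rightarrow> real) \<Rightarrow> 's \<Rightarrow> real" where
  "Pre1_sel Gam2 \<delta> xi1 v s = (INF xi2 \<in> {xi2. is_selector Gam2 xi2}. Pre_pair \<delta> xi1 xi2 v s)"

definition Pre1 ::
  "('s::finite \<Rightarrow> 'm::finite set) \<Rightarrow> ('s \<Rightarrow> 'm set) \<Rightarrow> ('s \<Rightarrow> 'm \<Rightarrow> 'm \<Rightarrow> 's pmf)
    \<Rightarrow> ('s \<Rightarrow> real) \<Rightarrow> 's \<Rightarrow> real" where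
  "Pre1 Gam1 Gam2 \<delta> v s = (SUP xi1 \<in> {xi1. is_selector Gam1 xi1}. Pre1_sel Gam2 \<delta> xi1 v s)"

primrec reach_within ::
  "('s::finite \<Rightarrow> 'm::finite \<Rightarrow> 'm \<Rightarrow> 's pmf) \<Rightarrow> ('s list \<Rightarrow> 'm pmf) \<Rightarrow> ('s list \<Rightarrow> 'm pmf)
    \<Rightarrow> 's set \<Rightarrow> nat \<Rightarrow> 's list \<Rightarrow> real" where
  "reach_within \<delta> st1 st2 X 0 h = (if last h \<in> X then 1 else 0)"
| "reach_within \<delta> st1 st2 X (Suc n) h =
     (if last h \<in> X then 1 else
       (\<Sum>a\<in>UNIV. \<Sum>b\<in>UNIV. \<Sum>t\<in>UNIV.
          pmf (st1 h) a * pmf (st2 h) b * pmf (\<delta> (last h) a b) t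
          * reach_within \<delta> st1 st2 X n (h @ [t])))"

text \<open>Pr_s^{st1,st2}(Reach X), as the limit (supremum) of the probabilities of
  reaching X within n steps (continuity of the measure from below).\<close>
definition prob_reach ::
  "('s::finite \<Rightarrow> 'm::finite \<Rightarrow> 'm \<Rightarrow> 's pmf) \<Rightarrow> ('s list \<Rightarrow> 'm pmf) \<Rightarrow> ('s list \<Rightarrow> 'm pmf)
    \<Rightarrow> 's set \<Rightarrow> 's \<Rightarrow> real" where
  "prob_reach \<delta> st1 st2 X s = (SUP n. reach_within \<delta> st1 st2 X n [s])"

definition W2 ::
  "('s::finite \<Rightarrow> 'm::finite set) \<Rightarrow> ('s \<Rightarrow> 'm set) \<Rightarrow> ('s \<Rightarrow> 'm \<Rightarrow> 'm \<Rightarrow> 's pmf)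
    \<Rightarrow> 's set \<Rightarrow> 's set" where
  "W2 Gam1 Gam2 \<delta> T =
     {s. (SUP st1 \<in> {st1. is_strategy Gam1 st1}.
            INF st2 \<in> {st2. is_strategy Gam2 st2}. prob_reach \<delta> st1 st2 T s) = 0}"

primrec val_iter ::
  "('s::finite \<Rightarrow> 'm::finite set) \<Rightarrow> ('s \<Rightarrow> 'm set) \<Rightarrow> ('s \<Rightarrow> 'm \<Rightarrow> 'm \<Rightarrow> 's pmf)
    \<Rightarrow> 's set \<Rightarrow> nat \<Rightarrow> 's \<Rightarrow> real" where
  "val_iter Gam1 Gam2 \<delta> T 0 = (\<lambda>s. if s \<in> T then 1 else 0)"
| "val_iter Gam1 Gam2 \<delta> T (Suc k) = Pre1 Gam1 Gam2 \<delta> (val_iter Gam1 Gam2 \<delta> T k)"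

definition entry_time :: "(nat \<Rightarrow> 's \<Rightarrow> real) \<Rightarrow> nat \<Rightarrow> 's \<Rightarrow> nat" where
  "entry_time u k s = (LEAST j. j \<le> k \<and> u j s = u k s)"

definition eta :: "('s \<Rightarrow> 'm set) \<Rightarrow> (nat \<Rightarrow> 's \<Rightarrow> 'm pmf) \<Rightarrow> (nat \<Rightarrow> 's \<Rightarrow> real)
    \<Rightarrow> nat \<Rightarrow> 's \<Rightarrow> 'm pmf" where
  "eta Gam1 \<zeta> u k s =
     (if entry_time u k s > 0 then \<zeta> (entry_time u k s) s else pmf_of_set (Gam1 s))"

end

(*
  Outside T \<union> W2 the selector \<eta>_k is a progress measure: if j is the entry time of s, then
  \<zeta>_j is optimal for computing u_j(s) = u_k(s) from u_(j-1), so against any move of player 2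
  some successor t is reached with positive probability where either u_k(t) > u_k(s), or
  u_k(t) = u_k(s) and t has an earlier entry time. This lexicographic order is strict on a
  finite set, so from every history T \<union> W2 is hit within |S| + 1 steps with probability at
  least some fixed c > 0; iterating, the probability of never hitting it is at most (1 - c)^n
  for every n, hence 0.
*)

theory Submission
  imports Defs
begin

text \<open>Expected value of f after one round in which the two moves are drawn independently
  from p and q and the successor from r; both Pre_pair and the recursion of reach_within
  have this shape.\<close>
definition step_exp :: "'a pmf \<Rightarrow> 'b pmf \<Rightarrow> ('a \<Rightarrow> 'b \<Rightarrow> 's pmf) \<Rightarrow> ('s \<Rightarrow> real) \<Rightarrow> real" where
  "step_exp p q r f = (\<Sum>a\<in>UNIV. \<Sum>b\<in>UNIV. \<Sum>t\<in>UNIV. pmf p a * pmf q b * pmf (r a b) t * f t)"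

lemma sum_pmf_UNIV: "(\<Sum>x\<in>UNIV. pmf p x) = 1" for p :: "'a::finite pmf"
  by (rule sum_pmf_eq_1) auto

context
  fixes p :: "'a::finite pmf" and q :: "'b::finite pmf" and r :: "'a \<Rightarrow> 'b \<Rightarrow> 's::finite pmf"
begin

lemma step_exp_const: "step_exp p q r (\<lambda>t. c) = c"
proof -
  have "step_exp p q r (\<lambda>t. c) = (\<Sum>a\<in>UNIV. \<Sum>b\<in>UNIV. pmf p a * pmf q b * c * (\<Sum>t\<in>UNIV. pmf (r a b) t))"
    unfolding step_exp_def by (simp add: sum_distrib_left mult_ac)
  also have "\<dots> = (\<Sum>a\<in>UNIV. \<Sum>b\<in>UNIV. pmf p a * pmf q b) * c"
    by (simp add: sum_pmf_UNIV sum_distrib_right)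
  also have "\<dots> = (\<Sum>a\<in>UNIV. pmf p a) * (\<Sum>b\<in>UNIV. pmf q b) * c"
    by (simp add: sum_product)
  finally show ?thesis by (simp add: sum_pmf_UNIV)
qed

lemma step_exp_mono: "(\<And>t. f t \<le> g t) \<Longrightarrow> step_exp p q r f \<le> step_exp p q r g"
  unfolding step_exp_def by (intro sum_mono mult_left_mono) auto

lemma step_exp_nonneg: "(\<And>t. 0 \<le> f t) \<Longrightarrow> 0 \<le> step_exp p q r f"
  unfolding step_exp_def by (intro sum_nonneg mult_nonneg_nonneg) auto

lemma step_exp_le_1: "(\<And>t. f t \<le> 1) \<Longrightarrow> step_exp p q r f \<le> 1"
  using step_exp_mono[of f "\<lambda>t. 1"] by (simp add: step_exp_const)

lemma step_exp_diff: "step_exp p q r (\<lambda>t. c - f t) = c - step_exp p q r f"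
  using step_exp_const[of c] unfolding step_exp_def by (simp add: right_diff_distrib sum_subtractf)

lemma step_exp_mult_right: "step_exp p q r (\<lambda>t. f t * c) = step_exp p q r f * c"
  unfolding step_exp_def by (simp add: sum_distrib_right sum_distrib_left mult_ac)

lemma step_exp_cong:
  assumes "\<And>a b t. a \<in> set_pmf p \<Longrightarrow> b \<in> set_pmf q \<Longrightarrow> t \<in> set_pmf (r a b) \<Longrightarrow> f t = g t"
  shows "step_exp p q r f = step_exp p q r g"
  unfolding step_exp_def by (intro sum.cong refl) (metis assms mult_eq_0_iff set_pmf_iff)

lemma step_exp_le_support:
  "\<exists>a\<in>set_pmf p. \<exists>b\<in>set_pmf q. \<exists>t\<in>set_pmf (r a b). step_exp p q r f \<le> f t"
proof -
  define S where "S = (\<Union>a\<in>set_pmf p. \<Union>b\<in>set_pmf q. set_pmf (r a b))"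
  define m where "m = Max (f ` S)"
  obtain a b t where "a \<in> set_pmf p" "b \<in> set_pmf q" "t \<in> set_pmf (r a b)"
    by (meson ex_in_conv set_pmf_not_empty)
  then have "S \<noteq> {}"
    unfolding S_def by blast
  then have "m \<in> f ` S"
    unfolding m_def by (intro Max_in finite_imageI finite) simp
  then obtain t where t: "t \<in> S" "f t = m"
    by blast
  have "step_exp p q r f = step_exp p q r (\<lambda>t. if t \<in> S then f t else m)"
  proof (rule step_exp_cong)
    fix a b t
    assume "a \<in> set_pmf p" "b \<in> set_pmf q" "t \<in> set_pmf (r a b)"
    then have "t \<in> S"
      unfolding S_def by blast
    then show "f t = (if t \<in> S then f t else m)"
      by simp
  qed
  also have "\<dots> \<le> step_exp p q r (\<lambda>t. m)"
    by (rule step_exp_mono) (simp add: m_def Max_ge finite)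
  finally have "step_exp p q r f \<le> f t"
    by (simp only: step_exp_const t(2))
  then show ?thesis
    using t(1) unfolding S_def by blast
qed

lemma step_exp_ge:
  assumes f: "\<And>t. 0 \<le> f t"
    and witness: "\<And>b. b \<in> set_pmf q \<Longrightarrow> \<exists>a t. c \<le> pmf p a * pmf (r a b) t * f t"
  shows "c \<le> step_exp p q r f"
proof -
  let ?inner = "\<lambda>b. \<Sum>a\<in>UNIV. \<Sum>t\<in>UNIV. pmf p a * pmf (r a b) t * f t"
  have "pmf q b * c \<le> pmf q b * ?inner b" for b
  proof (cases "b \<in> set_pmf q")
    case True
    then obtain a t where "c \<le> pmf p a * pmf (r a b) t * f t"
      using witness by blast
    also have "\<dots> \<le> (\<Sum>t\<in>UNIV. pmf p a * pmf (r a b) t * f t)"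
      by (rule member_le_sum) (auto intro!: mult_nonneg_nonneg f)
    also have "\<dots> \<le> ?inner b"
      by (rule member_le_sum) (auto intro!: sum_nonneg mult_nonneg_nonneg f)
    finally show ?thesis by (simp add: mult_left_mono)
  qed (simp add: set_pmf_iff)
  then have "(\<Sum>b\<in>UNIV. pmf q b * c) \<le> (\<Sum>b\<in>UNIV. pmf q b * ?inner b)"
    by (rule sum_mono)
  also have "\<dots> = step_exp p q r f"
    unfolding step_exp_def by (subst sum.swap) (simp add: sum_distrib_left mult_ac)
  finally show ?thesis by (simp add: sum_pmf_UNIV flip: sum_distrib_right)
qed

end

lemma reach_within_Suc:
  "reach_within \<delta> st1 st2 X (Suc n) h =
     (if last h \<in> X then 1
      else step_exp (st1 h) (st2 h) (\<delta> (last h)) (\<lambda>t. reach_within \<delta> st1 st2 X n (h @ [t])))"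
  by (simp add: step_exp_def mult_ac)

context
  fixes \<delta> :: "'s::finite \<Rightarrow> 'm::finite \<Rightarrow> 'm \<Rightarrow> 's pmf"
begin

lemma reach_within_bounds:
  "0 \<le> reach_within \<delta> st1 st2 X n h \<and> reach_within \<delta> st1 st2 X n h \<le> 1"
proof (induction n arbitrary: h)
  case (Suc n)
  then show ?case
    by (simp only: reach_within_Suc) (auto intro!: step_exp_nonneg step_exp_le_1)
qed simp

lemma reach_within_add_fail_le:
  assumes B: "\<And>h'. h' \<noteq> [] \<Longrightarrow> 1 - reach_within \<delta> st1 st2 X m h' \<le> B" and "0 \<le> B"
  shows "h \<noteq> [] \<Longrightarrow>
    1 - reach_within \<delta> st1 st2 X (n + m) h \<le> (1 - reach_within \<delta> st1 st2 X n h) * B"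
proof (induction n arbitrary: h)
  case 0
  then show ?case using B[of h] by (cases m) auto
next
  case (Suc n)
  show ?case
  proof (cases "last h \<in> X")
    case False
    have "1 - reach_within \<delta> st1 st2 X (Suc n + m) h
        = step_exp (st1 h) (st2 h) (\<delta> (last h)) (\<lambda>t. 1 - reach_within \<delta> st1 st2 X (n + m) (h @ [t]))"
      using False by (simp only: add_Suc reach_within_Suc step_exp_diff if_False)
    also have "\<dots> \<le> step_exp (st1 h) (st2 h) (\<delta> (last h))
                      (\<lambda>t. (1 - reach_within \<delta> st1 st2 X n (h @ [t])) * B)"
      by (rule step_exp_mono) (simp add: Suc.IH)
    also have "\<dots> = (1 - reach_within \<delta> st1 st2 X (Suc n) h) * B"
      using False by (simp only: reach_within_Suc step_exp_diff step_exp_mult_right if_False)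
    finally show ?thesis .
  qed (simp add: reach_within_Suc)
qed

lemma prob_reach_eq_1_if_uniform:
  assumes "0 < c" and uniform: "\<And>h. h \<noteq> [] \<Longrightarrow> c \<le> reach_within \<delta> st1 st2 X N h"
  shows "prob_reach \<delta> st1 st2 X s = 1"
proof -
  let ?R = "\<lambda>n. reach_within \<delta> st1 st2 X n [s]"
  have "c \<le> 1"
    using uniform[of "[s]"] reach_within_bounds[of st1 st2 X N "[s]"] by simp
  have fail: "1 - reach_within \<delta> st1 st2 X (j * N) h \<le> (1 - c) ^ j" if "h \<noteq> []" for j h
    using that
  proof (induction j arbitrary: h)
    case 0
    then show ?case using reach_within_bounds[of st1 st2 X 0 h] by simp
  next
    case (Suc j)
    have "1 - reach_within \<delta> st1 st2 X (N + j * N) h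
        \<le> (1 - reach_within \<delta> st1 st2 X N h) * (1 - c) ^ j"
      by (rule reach_within_add_fail_le) (use Suc \<open>c \<le> 1\<close> in auto)
    also have "\<dots> \<le> (1 - c) * (1 - c) ^ j"
      by (rule mult_right_mono) (use uniform[OF Suc.prems] \<open>c \<le> 1\<close> in auto)
    finally show ?case by (simp add: add.commute)
  qed
  have bdd: "bdd_above (range ?R)"
    using reach_within_bounds by (intro bdd_aboveI[of _ 1]) auto
  have "(SUP n. ?R n) \<le> 1"
    using reach_within_bounds by (intro cSUP_least) auto
  moreover have "1 \<le> (SUP n. ?R n)"
  proof (rule ccontr)
    assume "\<not> 1 \<le> (SUP n. ?R n)"
    then obtain j where j: "(1 - c) ^ j < 1 - (SUP n. ?R n)"
      using real_arch_pow_inv[of "1 - (SUP n. ?R n)" "1 - c"] \<open>0 < c\<close> by auto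
    have "?R (j * N) \<le> (SUP n. ?R n)"
      by (rule cSUP_upper[OF _ bdd]) simp
    then show False using fail[of "[s]" j] j by simp
  qed
  ultimately show ?thesis unfolding prob_reach_def by simp
qed

lemma reach_within_memoryless_ge_power:
  fixes rank :: "'s \<Rightarrow> nat"
  assumes st2: "is_strategy Gam2 st2" and "0 \<le> eps" "eps \<le> 1"
    and progress: "\<And>s b. s \<notin> X \<Longrightarrow> b \<in> Gam2 s \<Longrightarrow>
      \<exists>a t. eps \<le> pmf (\<xi> s) a * pmf (\<delta> s a b) t \<and> (t \<in> X \<or> rank t < rank s)"
  shows "h \<noteq> [] \<Longrightarrow> last h \<in> X \<or> rank (last h) < n \<Longrightarrow>
    eps ^ n \<le> reach_within \<delta> (memoryless \<xi>) st2 X n h"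
proof (induction n arbitrary: h)
  case (Suc n)
  show ?case
  proof (cases "last h \<in> X")
    case True
    then show ?thesis
      using power_le_one[OF \<open>0 \<le> eps\<close> \<open>eps \<le> 1\<close>, of "Suc n"] by simp
  next
    case False
    let ?s = "last h"
    have "eps ^ Suc n \<le> step_exp (\<xi> ?s) (st2 h) (\<delta> ?s)
                           (\<lambda>t. reach_within \<delta> (memoryless \<xi>) st2 X n (h @ [t]))"
    proof (rule step_exp_ge)
      fix b
      assume "b \<in> set_pmf (st2 h)"
      then have "b \<in> Gam2 ?s"
        using st2 Suc.prems(1) by (auto simp: is_strategy_def)
      then obtain a t where at: "eps \<le> pmf (\<xi> ?s) a * pmf (\<delta> ?s a b) t"
        and "t \<in> X \<or> rank t < rank ?s"
        using progress False by blast
      then have "eps ^ n \<le> reach_within \<delta> (memoryless \<xi>) st2 X n (h @ [t])"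
        using Suc.prems(2) False by (intro Suc.IH) auto
      then have "eps * eps ^ n \<le> pmf (\<xi> ?s) a * pmf (\<delta> ?s a b) t
                                  * reach_within \<delta> (memoryless \<xi>) st2 X n (h @ [t])"
        by (rule mult_mono[OF at]) (use \<open>0 \<le> eps\<close> in auto)
      then show "\<exists>a t. eps ^ Suc n \<le> pmf (\<xi> ?s) a * pmf (\<delta> ?s a b) t
                                  * reach_within \<delta> (memoryless \<xi>) st2 X n (h @ [t])"
        by auto
    qed (simp add: reach_within_bounds)
    then show ?thesis
      using False by (simp only: reach_within_Suc memoryless_def if_False)
  qed
qed simp

lemma prob_reach_memoryless_eq_1:
  fixes rank :: "'s \<Rightarrow> nat"
  assumes st2: "is_strategy Gam2 st2"
    and progress: "\<And>s b. s \<notin> X \<Longrightarrow> b \<in> Gam2 s \<Longrightarrow>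
      \<exists>a\<in>set_pmf (\<xi> s). \<exists>t\<in>set_pmf (\<delta> s a b). t \<in> X \<or> rank t < rank s"
  shows "prob_reach \<delta> (memoryless \<xi>) st2 X s = 1"
proof -
  define P where "P = (\<lambda>(s, a, b, t). pmf (\<xi> s) a * pmf (\<delta> s a b) t) `
                        {(s, a, b, t). a \<in> set_pmf (\<xi> s) \<and> t \<in> set_pmf (\<delta> s a b)}"
  define eps where "eps = Min (insert 1 P)"
  have "finite P" unfolding P_def by simp
  then have "0 < eps" "eps \<le> 1"
    unfolding eps_def P_def by (auto simp: pmf_positive)
  have eps_le: "eps \<le> pmf (\<xi> s) a * pmf (\<delta> s a b) t"
    if "a \<in> set_pmf (\<xi> s)" "t \<in> set_pmf (\<delta> s a b)" for s a b t
    unfolding eps_def using \<open>finite P\<close> that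
    by (intro Min_le) (auto simp: P_def intro!: image_eqI[where x = "(s, a, b, t)"])
  define N where "N = Suc (Max (range rank))"
  have "rank s' < N" for s'
    unfolding N_def by (simp add: le_imp_less_Suc)
  have progress_eps: "\<exists>a t. eps \<le> pmf (\<xi> s') a * pmf (\<delta> s' a b) t \<and> (t \<in> X \<or> rank t < rank s')"
    if "s' \<notin> X" "b \<in> Gam2 s'" for s' b
    using progress[OF that] eps_le by blast
  have "eps ^ N \<le> reach_within \<delta> (memoryless \<xi>) st2 X N h" if "h \<noteq> []" for h
    using reach_within_memoryless_ge_power[OF st2 less_imp_le[OF \<open>0 < eps\<close>] \<open>eps \<le> 1\<close> progress_eps]
      that \<open>rank (last h) < N\<close> by blast
  then show ?thesis
    using \<open>0 < eps\<close> by (intro prob_reach_eq_1_if_uniform[of "eps ^ N"]) auto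
qed

end

lemma is_selector_some: "(\<And>s. Gam s \<noteq> {}) \<Longrightarrow> is_selector Gam (\<lambda>s. return_pmf (SOME x. x \<in> Gam s))"
  unfolding is_selector_def by (simp add: some_in_eq)

lemma Pre_pair_eq_step_exp: "Pre_pair \<delta> \<xi>1 \<xi>2 v s = step_exp (\<xi>1 s) (\<xi>2 s) (\<delta> s) v"
  unfolding Pre_pair_def step_exp_def by (simp add: mult_ac)

lemma Pre1_sel_le_Pre_pair:
  fixes \<delta> :: "'s::finite \<Rightarrow> 'm::finite \<Rightarrow> 'm \<Rightarrow> 's pmf"
  assumes "is_selector Gam2 \<xi>2" and "\<And>t. 0 \<le> v t"
  shows "Pre1_sel Gam2 \<delta> \<xi>1 v s \<le> Pre_pair \<delta> \<xi>1 \<xi>2 v s"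
  unfolding Pre1_sel_def
proof (rule cINF_lower)
  show "bdd_below ((\<lambda>\<xi>2. Pre_pair \<delta> \<xi>1 \<xi>2 v s) ` {\<xi>2. is_selector Gam2 \<xi>2})"
    using assms(2) by (intro bdd_belowI[of _ 0]) (auto simp: Pre_pair_eq_step_exp intro: step_exp_nonneg)
qed (use assms(1) in simp)

locale concurrent_game =
  fixes Gam1 Gam2 :: "'s::finite \<Rightarrow> 'm::finite set"
    and \<delta> :: "'s \<Rightarrow> 'm \<Rightarrow> 'm \<Rightarrow> 's pmf"
  assumes Gam1_nonempty: "Gam1 s \<noteq> {}"
    and Gam2_nonempty: "Gam2 s \<noteq> {}"
begin

lemma selectors1_nonempty: "{\<xi>. is_selector Gam1 \<xi>} \<noteq> {}"
proof -
  have "is_selector Gam1 (\<lambda>s. return_pmf (SOME x. x \<in> Gam1 s))"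
    by (rule is_selector_some) (rule Gam1_nonempty)
  then show ?thesis by auto
qed

lemma selectors2_nonempty: "{\<xi>. is_selector Gam2 \<xi>} \<noteq> {}"
proof -
  have "is_selector Gam2 (\<lambda>s. return_pmf (SOME x. x \<in> Gam2 s))"
    by (rule is_selector_some) (rule Gam2_nonempty)
  then show ?thesis by auto
qed

context
  fixes v :: "'s \<Rightarrow> real"
  assumes v_nonneg: "\<And>t. 0 \<le> v t" and v_le_1: "\<And>t. v t \<le> 1"
begin

lemma Pre1_sel_nonneg: "0 \<le> Pre1_sel Gam2 \<delta> \<xi>1 v s"
  unfolding Pre1_sel_def using selectors2_nonempty
  by (intro cINF_greatest) (auto simp: Pre_pair_eq_step_exp intro: step_exp_nonneg v_nonneg)

lemma Pre1_sel_le_1: "Pre1_sel Gam2 \<delta> \<xi>1 v s \<le> 1"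
proof -
  obtain \<xi>2 where "is_selector Gam2 \<xi>2"
    using selectors2_nonempty by blast
  then have "Pre1_sel Gam2 \<delta> \<xi>1 v s \<le> Pre_pair \<delta> \<xi>1 \<xi>2 v s"
    by (rule Pre1_sel_le_Pre_pair) (rule v_nonneg)
  also have "\<dots> \<le> 1"
    unfolding Pre_pair_eq_step_exp by (rule step_exp_le_1) (rule v_le_1)
  finally show ?thesis .
qed

lemma Pre1_sel_le_Pre1: "is_selector Gam1 \<xi>1 \<Longrightarrow> Pre1_sel Gam2 \<delta> \<xi>1 v s \<le> Pre1 Gam1 Gam2 \<delta> v s"
  unfolding Pre1_def using Pre1_sel_le_1 by (intro cSUP_upper bdd_aboveI[of _ 1]) auto

lemma Pre1_nonneg: "0 \<le> Pre1 Gam1 Gam2 \<delta> v s"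
proof -
  obtain \<xi>1 where "is_selector Gam1 \<xi>1"
    using selectors1_nonempty by blast
  then show ?thesis
    by (rule order_trans[OF Pre1_sel_nonneg Pre1_sel_le_Pre1])
qed

lemma Pre1_le_1: "Pre1 Gam1 Gam2 \<delta> v s \<le> 1"
  unfolding Pre1_def using selectors1_nonempty Pre1_sel_le_1 by (intro cSUP_least) auto

end

lemma Pre1_mono:
  assumes "\<And>t. 0 \<le> v t" and "\<And>t. v t \<le> w t" and "\<And>t. w t \<le> 1"
  shows "Pre1 Gam1 Gam2 \<delta> v s \<le> Pre1 Gam1 Gam2 \<delta> w s"
proof -
  have w_nonneg: "0 \<le> w t" for t
    using assms(1,2) by (rule order_trans)
  have sel_mono: "Pre1_sel Gam2 \<delta> \<xi>1 v s \<le> Pre1_sel Gam2 \<delta> \<xi>1 w s" for \<xi>1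
    unfolding Pre1_sel_def[of _ _ _ w] using selectors2_nonempty
  proof (rule cINF_greatest)
    fix \<xi>2 assume "\<xi>2 \<in> {\<xi>. is_selector Gam2 \<xi>}"
    then have "Pre1_sel Gam2 \<delta> \<xi>1 v s \<le> Pre_pair \<delta> \<xi>1 \<xi>2 v s"
      using assms(1) by (intro Pre1_sel_le_Pre_pair) auto
    also have "\<dots> \<le> Pre_pair \<delta> \<xi>1 \<xi>2 w s"
      unfolding Pre_pair_eq_step_exp by (rule step_exp_mono) (rule assms(2))
    finally show "Pre1_sel Gam2 \<delta> \<xi>1 v s \<le> Pre_pair \<delta> \<xi>1 \<xi>2 w s" .
  qed
  show ?thesis
    unfolding Pre1_def[of _ _ _ v] using selectors1_nonempty
  proof (rule cSUP_least)
    fix \<xi>1 assume "\<xi>1 \<in> {\<xi>. is_selector Gam1 \<xi>}"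
    then show "Pre1_sel Gam2 \<delta> \<xi>1 v s \<le> Pre1 Gam1 Gam2 \<delta> w s"
      using order_trans[OF sel_mono Pre1_sel_le_Pre1[OF w_nonneg assms(3)]] by simp
  qed
qed

end

locale reachability_game = concurrent_game +
  fixes T :: "'s::finite set"
  assumes T_absorbing: "s \<in> T \<Longrightarrow> a \<in> Gam1 s \<Longrightarrow> b \<in> Gam2 s \<Longrightarrow> \<delta> s a b = return_pmf s"
begin

abbreviation u :: "nat \<Rightarrow> 's \<Rightarrow> real" where
  "u \<equiv> val_iter Gam1 Gam2 \<delta> T"

lemma val_iter_bounds: "0 \<le> u j s \<and> u j s \<le> 1"
  by (induction j arbitrary: s) (auto intro: Pre1_nonneg Pre1_le_1)

lemma val_iter_0_le_1: "u 0 s \<le> u 1 s"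
proof (cases "s \<in> T")
  case True
  obtain \<xi>1 where \<xi>1: "is_selector Gam1 \<xi>1"
    using selectors1_nonempty by blast
  have "1 \<le> Pre1_sel Gam2 \<delta> \<xi>1 (u 0) s"
    unfolding Pre1_sel_def using selectors2_nonempty
  proof (rule cINF_greatest)
    fix \<xi>2 assume \<xi>2: "\<xi>2 \<in> {\<xi>. is_selector Gam2 \<xi>}"
    have "Pre_pair \<delta> \<xi>1 \<xi>2 (u 0) s = step_exp (\<xi>1 s) (\<xi>2 s) (\<delta> s) (\<lambda>t. 1)"
      unfolding Pre_pair_eq_step_exp
    proof (rule step_exp_cong)
      fix a b t
      assume a: "a \<in> set_pmf (\<xi>1 s)" and b: "b \<in> set_pmf (\<xi>2 s)" and t: "t \<in> set_pmf (\<delta> s a b)"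
      have "a \<in> Gam1 s" "b \<in> Gam2 s"
        using \<xi>1 \<xi>2 a b unfolding is_selector_def by blast+
      then have "\<delta> s a b = return_pmf s"
        by (rule T_absorbing[OF True])
      then have "t = s"
        using t by simp
      then show "u 0 t = 1" using True by simp
    qed
    then show "1 \<le> Pre_pair \<delta> \<xi>1 \<xi>2 (u 0) s"
      by (simp add: step_exp_const)
  qed
  also have "\<dots> \<le> u 1 s"
    using Pre1_sel_le_Pre1[OF _ _ \<xi>1, of "u 0"] by simp
  finally show ?thesis using True by simp
qed (use val_iter_bounds[of 1 s] in simp)

lemma val_iter_mono: "j \<le> j' \<Longrightarrow> u j s \<le> u j' s"
proof (rule lift_Suc_mono_le[where f = "\<lambda>j. u j s"])
  show "u n s \<le> u (Suc n) s" for n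
  proof (induction n arbitrary: s)
    case 0
    then show ?case using val_iter_0_le_1 by simp
  next
    case (Suc n)
    have "Pre1 Gam1 Gam2 \<delta> (u n) s \<le> Pre1 Gam1 Gam2 \<delta> (u (Suc n)) s"
      by (rule Pre1_mono) (use Suc.IH val_iter_bounds[of n] val_iter_bounds[of "Suc n"] in auto)
    then show ?case by simp
  qed
qed

end

lemma entry_time_le: "entry_time u k s \<le> k"
  and entry_time_eq: "u (entry_time u k s) s = u k s"
  unfolding entry_time_def by (metis (mono_tags, lifting) LeastI order_refl)+

lemma entry_time_least: "j \<le> k \<Longrightarrow> u j s = u k s \<Longrightarrow> entry_time u k s \<le> j"
  unfolding entry_time_def by (rule Least_le) simp

definition improves :: "('s \<Rightarrow> 'a::order) \<Rightarrow> ('s \<Rightarrow> 'b::order) \<Rightarrow> 's \<Rightarrow> 's \<Rightarrow> bool" where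
  "improves v e t s \<longleftrightarrow> v s < v t \<or> v t = v s \<and> e t < e s"

lemma transp_improves: "transp (improves v e)"
  unfolding improves_def by (rule transpI) (auto dest: order.strict_trans)

lemma irreflp_improves: "irreflp (improves v e)"
  unfolding improves_def by (rule irreflpI) simp

lemma card_lower_set_strict_mono:
  fixes R :: "'a::finite \<Rightarrow> 'a \<Rightarrow> bool"
  assumes "transp R" "irreflp R" "R t s"
  shows "card {x. R x t} < card {x. R x s}"
proof (rule psubset_card_mono)
  show "{x. R x t} \<subset> {x. R x s}"
    using assms by (auto dest: transpD irreflpD)
qed simp

context reachability_game
begin

lemma entry_time_pos:
  assumes "s \<notin> T" and "0 < u (k - 1) s"
  shows "0 < entry_time u k s"
proof (rule ccontr)
  assume "\<not> 0 < entry_time u k s"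
  then have "u k s = 0"
    using entry_time_eq[of u k s] \<open>s \<notin> T\<close> by simp
  moreover have "u (k - 1) s \<le> u k s"
    by (rule val_iter_mono) simp
  ultimately show False using \<open>0 < u (k - 1) s\<close> by simp
qed

text \<open>Optimality of \<zeta> j, for j the entry time of s, in the step from u (j - 1) to
  u j = u k yields a successor t with u (j - 1) t \<ge> u k s.\<close>
lemma eta_progress:
  assumes zeta: "\<forall>j\<ge>1. is_selector Gam1 (\<zeta> j) \<and>
                   Pre1_sel Gam2 \<delta> (\<zeta> j) (u (j - 1)) = Pre1 Gam1 Gam2 \<delta> (u (j - 1))"
    and "s \<notin> T" "0 < u (k - 1) s" "b \<in> Gam2 s"
  shows "\<exists>a\<in>set_pmf (eta Gam1 \<zeta> u k s). \<exists>t\<in>set_pmf (\<delta> s a b).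
           improves (u k) (entry_time u k) t s"
proof -
  define j where "j = entry_time u k s"
  have "0 < j" "j \<le> k"
    unfolding j_def using entry_time_pos[OF assms(2,3)] entry_time_le by auto
  then have eta_s: "eta Gam1 \<zeta> u k s = \<zeta> j s"
    by (simp add: eta_def j_def)
  define \<xi>2 where "\<xi>2 = (\<lambda>s'. if s' = s then return_pmf b else return_pmf (SOME b'. b' \<in> Gam2 s'))"
  have \<xi>2: "is_selector Gam2 \<xi>2"
    using \<open>b \<in> Gam2 s\<close> Gam2_nonempty by (auto simp: is_selector_def \<xi>2_def some_in_eq)
  have "u k s = u j s"
    unfolding j_def by (rule entry_time_eq[symmetric])
  also have "\<dots> = Pre1 Gam1 Gam2 \<delta> (u (j - 1)) s"
    using \<open>0 < j\<close> by (cases j) auto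
  also have "\<dots> = Pre1_sel Gam2 \<delta> (\<zeta> j) (u (j - 1)) s"
    using zeta \<open>0 < j\<close> by simp
  also have "\<dots> \<le> Pre_pair \<delta> (\<zeta> j) \<xi>2 (u (j - 1)) s"
    using \<xi>2 val_iter_bounds by (intro Pre1_sel_le_Pre_pair) auto
  also have "\<dots> = step_exp (\<zeta> j s) (return_pmf b) (\<delta> s) (u (j - 1))"
    by (simp add: Pre_pair_eq_step_exp \<xi>2_def)
  finally obtain a t where a: "a \<in> set_pmf (\<zeta> j s)" and t: "t \<in> set_pmf (\<delta> s a b)"
    and ut: "u k s \<le> u (j - 1) t"
    using step_exp_le_support[of "\<zeta> j s" "return_pmf b" "\<delta> s" "u (j - 1)"]
    by (auto intro: order_trans)
  have "u (j - 1) t \<le> u k t"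
    using \<open>j \<le> k\<close> by (intro val_iter_mono) simp
  have "improves (u k) (entry_time u k) t s"
  proof (cases "u k s < u k t")
    case False
    then have "u k t = u k s" "u (j - 1) t = u k t"
      using ut \<open>u (j - 1) t \<le> u k t\<close> by auto
    moreover have "entry_time u k t \<le> j - 1"
      using \<open>u (j - 1) t = u k t\<close> \<open>j \<le> k\<close> by (intro entry_time_least) auto
    ultimately show ?thesis
      using \<open>0 < j\<close> by (auto simp: improves_def j_def)
  qed (simp add: improves_def)
  then show ?thesis using a t eta_s by auto
qed

end

theorem lemma5:
  fixes Gam1 Gam2 :: "'s::finite \<Rightarrow> 'm::finite set"
    and \<delta> :: "'s \<Rightarrow> 'm \<Rightarrow> 'm \<Rightarrow> 's pmf"
    and T :: "'s set"
    and \<zeta> :: "nat \<Rightarrow> 's \<Rightarrow> 'm pmf"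
    and k :: nat
  assumes nonempty1: "\<forall>s. Gam1 s \<noteq> {}"
    and nonempty2: "\<forall>s. Gam2 s \<noteq> {}"
    and absorbing: "\<forall>s \<in> T \<union> W2 Gam1 Gam2 \<delta> T. \<forall>a \<in> Gam1 s. \<forall>b \<in> Gam2 s.
                      \<delta> s a b = return_pmf s"
    and zeta: "\<forall>j \<ge> 1. is_selector Gam1 (\<zeta> j) \<and>
                 Pre1_sel Gam2 \<delta> (\<zeta> j) (val_iter Gam1 Gam2 \<delta> T (j - 1))
                   = Pre1 Gam1 Gam2 \<delta> (val_iter Gam1 Gam2 \<delta> T (j - 1))"
    and k_pos: "k \<ge> 1"
    and pos: "\<forall>s. s \<notin> W2 Gam1 Gam2 \<delta> T \<longrightarrow> val_iter Gam1 Gam2 \<delta> T (k - 1) s > 0"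
  shows "\<forall>st2. is_strategy Gam2 st2 \<longrightarrow>
           (\<forall>s. prob_reach \<delta> (memoryless (eta Gam1 \<zeta> (val_iter Gam1 Gam2 \<delta> T) k)) st2
                  (T \<union> W2 Gam1 Gam2 \<delta> T) s = 1)"
proof (intro allI impI)
  fix st2 s
  assume st2: "is_strategy Gam2 st2"
  interpret reachability_game Gam1 Gam2 \<delta> T
    using nonempty1 nonempty2 absorbing by unfold_locales auto
  define rank where "rank s' = card {t. improves (u k) (entry_time u k) t s'}" for s'
  show "prob_reach \<delta> (memoryless (eta Gam1 \<zeta> u k)) st2 (T \<union> W2 Gam1 Gam2 \<delta> T) s = 1"
  proof (rule prob_reach_memoryless_eq_1[OF st2, where rank = rank])
    fix s' b
    assume "s' \<notin> T \<union> W2 Gam1 Gam2 \<delta> T" "b \<in> Gam2 s'"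
    then have "\<exists>a\<in>set_pmf (eta Gam1 \<zeta> u k s'). \<exists>t\<in>set_pmf (\<delta> s' a b).
                 improves (u k) (entry_time u k) t s'"
      using pos by (intro eta_progress[OF zeta]) auto
    then show "\<exists>a\<in>set_pmf (eta Gam1 \<zeta> u k s'). \<exists>t\<in>set_pmf (\<delta> s' a b).
                 t \<in> T \<union> W2 Gam1 Gam2 \<delta> T \<or> rank t < rank s'"
      unfolding rank_def
      by (metis card_lower_set_strict_mono transp_improves irreflp_improves)
  qed
qed

end
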